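(* Let $q > 1$ be an integer. For all positive integers $n$ and $M$, if $W$ is chosen uniformly at random from $\{x_0,\ldots,x_{q-1}\}^M$, then $$\Pr\left(W \in C(n,q,M)\right) \leq \left(\frac{q}{q-1}\right)^{n-1}q^{-2^n+n+1}.$$
   Context: Fix the alphabet $\{x_0,\ldots,x_{q-1}\}$ of $q$ letters. A word $W$ is an instance of a word $V = y_0y_1\cdots y_{m-1}$ (each $y_i$ a letter) if $W = A_0A_1\cdots A_{m-1}$ with each $A_i$ a nonempty word and $A_i = A_j$ whenever $y_i = y_j$. The Zimin words are defined by $Z_0 := \varepsilon$ (the empty word) and $Z_{n+1} := Z_n z_n Z_n$ for distinct letters $z_0,z_1,\dots$. $C(n,q,M)$ denotes the set of words $W \in \{x_0,\ldots,x_{q-1}\}^M$ that are instances of $Z_n$. *)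

theory Defs
  imports "HOL-Analysis.Analysis"
begin

(* Words are lists of natural numbers; letter x_i is represented by i. *)

(* Zimin words over the pattern alphabet z_0, z_1, ... (z_i represented by i):
   Z_0 = empty, Z_{n+1} = Z_n z_n Z_n *)
fun zimin :: "nat \<Rightarrow> nat list" where
  "zimin 0 = []"
| "zimin (Suc n) = zimin n @ [n] @ zimin n"

(* W is an instance of V = y_0 ... y_{m-1}: W = A_0 ... A_{m-1}, each A_i nonempty,
   A_i = A_j whenever y_i = y_j.  Equivalently, a substitution assigning a nonempty
   word to each letter of V. *)
definition is_instance :: "'a list \<Rightarrow> 'b list \<Rightarrow> bool" where
  "is_instance W V \<longleftrightarrow>
     (\<exists>f :: 'b \<Rightarrow> 'a list. (\<forall>y\<in>set V. f y \<noteq> []) \<and> W = concat (map f V))"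

definition C :: "nat \<Rightarrow> nat \<Rightarrow> nat \<Rightarrow> nat list set" where
  "C n q M = {W. set W \<subseteq> {0..<q} \<and> length W = M \<and> is_instance W (zimin n)}"

end

theory Submission
  imports Defs
begin

(* An instance of Z_{n+1} has the shape A B A, where A is an instance of Z_n of some length
   a >= 2^n - 1 and B is an arbitrary word of length M - 2a. So if d_n(M) is the proportion of
   instances of Z_n among the q^M words of length M, then d_{n+1}(M) <= sum_{a >= 2^n - 1} d_n(a) q^(-a).
   Bounding d_n(a) uniformly and summing the geometric tail multiplies the bound by
   q/(q-1) * q^(1 - 2^n); the induction starts from d_1 <= 1. *)

lemma length_le_length_concat_map:
  assumes "\<forall>y\<in>set V. f y \<noteq> []"
  shows "length V \<le> length (concat (map f V))"
  using assms
proof (induction V)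
  case (Cons y V)
  then have "length (f y) \<ge> 1"
    by (simp add: Suc_le_eq)
  with Cons show ?case by simp
qed simp

lemma sum_power_tail_le:
  fixes x :: "'a::linordered_field"
  assumes "0 \<le> x" "x < 1" "finite S" "\<And>a. a \<in> S \<Longrightarrow> k \<le> a"
  shows "(\<Sum>a\<in>S. x ^ a) \<le> x ^ k / (1 - x)"
proof -
  define N where "N = Max (insert k S)"
  have "(1 - x) * (\<Sum>a=k..N. x ^ a) = x ^ k - x ^ Suc N"
    by (rule sum_gp_multiplied) (use assms(3) in \<open>simp add: N_def\<close>)
  then have "(\<Sum>a=k..N. x ^ a) \<le> x ^ k / (1 - x)"
    using assms(1,2) by (simp add: le_divide_eq mult.commute)
  moreover have "(\<Sum>a\<in>S. x ^ a) \<le> (\<Sum>a=k..N. x ^ a)"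
    by (rule sum_mono2) (use assms in \<open>auto simp: N_def\<close>)
  ultimately show ?thesis by linarith
qed

definition words :: "nat \<Rightarrow> nat \<Rightarrow> nat list set" where
  "words q L = {W. set W \<subseteq> {0..<q} \<and> length W = L}"

lemma finite_words: "finite (words q L)"
  unfolding words_def by (rule finite_lists_length_eq) simp

lemma card_words: "card (words q L) = q ^ L"
  unfolding words_def using card_lists_length_eq[of "{0..<q}" L] by simp

lemma C_subset_words: "C n q M \<subseteq> words q M"
  unfolding C_def words_def by auto

lemma finite_C: "finite (C n q M)"
  using finite_subset[OF C_subset_words finite_words] .

lemma length_zimin: "length (zimin n) = 2 ^ n - 1"
proof -
  have "length (zimin n) + 1 = 2 ^ n"
    by (induction n) auto
  then show ?thesis by linarith
qed

lemma length_ge_of_is_instance: "is_instance W V \<Longrightarrow> length V \<le> length W"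
  unfolding is_instance_def using length_le_length_concat_map by blast

lemma C_Suc_subset:
  "C (Suc n) q M \<subseteq>
     (\<Union>a \<in> {a. 2 ^ n - 1 \<le> a \<and> 2 * a < M}. (\<lambda>(A, B). A @ B @ A) ` (C n q a \<times> words q (M - 2 * a)))"
proof
  fix W assume "W \<in> C (Suc n) q M"
  then obtain f where f: "\<forall>y\<in>set (zimin (Suc n)). f y \<noteq> []"
    and W_eq: "W = concat (map f (zimin (Suc n)))"
    and W_words: "set W \<subseteq> {0..<q}" "length W = M"
    unfolding C_def is_instance_def by blast
  define A where "A = concat (map f (zimin n))"
  have W_ABA: "W = A @ f n @ A"
    using W_eq by (simp add: A_def)
  have "is_instance A (zimin n)"
    unfolding is_instance_def A_def using f by auto
  then have A_in: "A \<in> C n q (length A)" and A_long: "2 ^ n - 1 \<le> length A"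
    using W_words W_ABA length_ge_of_is_instance[of A "zimin n"]
    by (auto simp: C_def length_zimin)
  have B_in: "f n \<in> words q (M - 2 * length A)"
    unfolding words_def using W_words W_ABA by auto
  have "2 * length A < M"
    using W_words W_ABA f by (cases "f n") auto
  with A_in A_long B_in W_ABA show "W \<in> (\<Union>a \<in> {a. 2 ^ n - 1 \<le> a \<and> 2 * a < M}.
      (\<lambda>(A, B). A @ B @ A) ` (C n q a \<times> words q (M - 2 * a)))"
    by (intro UN_I[of "length A"]) (auto intro: rev_image_eqI)
qed

lemma card_C_Suc_le:
  "card (C (Suc n) q M) \<le> (\<Sum>a | 2 ^ n - 1 \<le> a \<and> 2 * a < M. card (C n q a) * q ^ (M - 2 * a))"
proof -
  let ?I = "{a. 2 ^ n - 1 \<le> a \<and> 2 * a < M}"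
  let ?glue = "\<lambda>(A, B). A @ B @ (A :: nat list)"
  have fin_I: "finite ?I"
    by (rule finite_subset[of _ "{..<M}"]) auto
  have "card (C (Suc n) q M) \<le> card (\<Union>a\<in>?I. ?glue ` (C n q a \<times> words q (M - 2 * a)))"
    by (intro card_mono[OF _ C_Suc_subset] finite_UN_I[OF fin_I] finite_imageI
        finite_cartesian_product finite_C finite_words)
  also have "\<dots> \<le> (\<Sum>a\<in>?I. card (?glue ` (C n q a \<times> words q (M - 2 * a))))"
    by (rule card_UN_le[OF fin_I])
  also have "\<dots> \<le> (\<Sum>a\<in>?I. card (C n q a \<times> words q (M - 2 * a)))"
    by (intro sum_mono card_image_le) (simp add: finite_C finite_words)
  also have "\<dots> = (\<Sum>a\<in>?I. card (C n q a) * q ^ (M - 2 * a))"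
    by (simp add: card_cartesian_product card_words)
  finally show ?thesis .
qed

definition zimin_density_bound :: "nat \<Rightarrow> nat \<Rightarrow> real" where
  "zimin_density_bound q n = (real q / (real q - 1)) ^ (n - 1) * real q powr (- (2 ^ n) + real n + 1)"

lemma zimin_density_bound_Suc:
  assumes "q > 1" and "n > 0"
  shows "zimin_density_bound q (Suc n)
           = zimin_density_bound q n * (real q / (real q - 1)) * (1 / real q) ^ (2 ^ n - 1)"
proof -
  have "\<And>m::nat. (1 / real q) ^ m = real q powr (- real m)"
    using assms(1) by (simp add: powr_minus_divide powr_realpow power_one_over)
  then have "(1 / real q) ^ (2 ^ n - 1) = real q powr (- real (2 ^ n - 1 :: nat))" .
  also have "\<dots> = real q powr (1 - 2 ^ n)"
    by (simp add: of_nat_diff)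
  finally have "(1 / real q) ^ (2 ^ n - 1) = real q powr (1 - 2 ^ n)" .
  moreover have "(real q / (real q - 1)) ^ n = (real q / (real q - 1)) ^ (n - 1) * (real q / (real q - 1))"
    using assms(2) by (cases n) simp_all
  moreover have "real q powr (- (2 ^ Suc n) + real (Suc n) + 1)
                   = real q powr (- (2 ^ n) + real n + 1) * real q powr (1 - 2 ^ n)"
    by (simp add: powr_add[symmetric])
  ultimately show ?thesis
    unfolding zimin_density_bound_def by (simp only: diff_Suc_1 mult_ac)
qed

lemma card_C_le:
  assumes q: "q > 1" and n: "n > 0"
  shows "real (card (C n q M)) \<le> real q ^ M * zimin_density_bound q n"
  using n
proof (induction n arbitrary: M rule: nat_induct_non_zero)
  case 1
  have "card (C 1 q M) \<le> q ^ M"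
    using card_mono[OF finite_words C_subset_words] by (simp add: card_words)
  then show ?case
    using q by (simp add: zimin_density_bound_def flip: of_nat_power)
next
  case (Suc n)
  let ?I = "{a. 2 ^ n - 1 \<le> a \<and> 2 * a < M}"
  let ?D = "zimin_density_bound q n"
  have fin_I: "finite ?I"
    by (rule finite_subset[of _ "{..<M}"]) auto
  have D_nonneg: "?D \<ge> 0"
    using q by (simp add: zimin_density_bound_def)
  have term_le: "real (card (C n q a)) * real q ^ (M - 2 * a) \<le> real q ^ M * ?D * (1 / real q) ^ a"
    if "2 * a < M" for a
  proof -
    have "real q ^ M * (1 / real q) ^ a = real q ^ a * real q ^ (M - 2 * a)"
      using q \<open>2 * a < M\<close> by (simp add: power_one_over field_simps flip: power_add)
    moreover have "real (card (C n q a)) * real q ^ (M - 2 * a) \<le> real q ^ a * ?D * real q ^ (M - 2 * a)"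
      using Suc.IH by (simp add: mult_right_mono)
    ultimately show ?thesis
      by (simp add: mult_ac)
  qed
  have "real (card (C (Suc n) q M)) \<le> (\<Sum>a\<in>?I. real (card (C n q a)) * real q ^ (M - 2 * a))"
    using card_C_Suc_le[of n q M] by (simp flip: of_nat_power of_nat_mult of_nat_sum)
  also have "\<dots> \<le> (\<Sum>a\<in>?I. real q ^ M * ?D * (1 / real q) ^ a)"
    using term_le by (intro sum_mono) auto
  also have "\<dots> = real q ^ M * ?D * (\<Sum>a\<in>?I. (1 / real q) ^ a)"
    by (simp add: sum_distrib_left)
  also have "\<dots> \<le> real q ^ M * ?D * ((1 / real q) ^ (2 ^ n - 1) / (1 - 1 / real q))"
    using q D_nonneg fin_I by (intro mult_left_mono sum_power_tail_le) auto
  also have "\<dots> = real q ^ M * zimin_density_bound q (Suc n)"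
    using q zimin_density_bound_Suc[OF q Suc.hyps] by (simp add: field_simps)
  finally show ?case .
qed

theorem mainTheorem6:
  fixes q n M :: nat
  assumes "q > 1" and "n > 0" and "M > 0"
  shows "real (card (C n q M)) / real (card {W :: nat list. set W \<subseteq> {0..<q} \<and> length W = M})
           \<le> (real q / (real q - 1)) ^ (n - 1) * real q powr (- (2 ^ n) + real n + 1)"
proof -
  have "card {W :: nat list. set W \<subseteq> {0..<q} \<and> length W = M} = q ^ M"
    using card_words[of q M] unfolding words_def .
  moreover have "real q ^ M > 0"
    using assms(1) by simp
  ultimately show ?thesis
    using card_C_le[OF assms(1,2), of M]
    by (simp add: divide_le_eq mult.commute zimin_density_bound_def)
qed

end
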